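(* Let $\varepsilon\in(0,1)$, $\alpha\in(0,1/5)$, $d$ with $\alpha d\ge1$, and let $G=(V,E)$ be a graph with no isolated vertices, $V=W\cup B$ a partition, $n=|V|$, such that: $G$ is an $(n,d,\alpha)$-expander; $G[W]$ has maximum degree $d_{\max}$ and minimum degree at least $2(\varepsilon+\alpha)d$; with $\delta=\varepsilon d/(d_{\max}-2\varepsilon d)$ we have $\frac{8(1+\delta)(d_{\max}+1)}{\delta^2\exp(\frac{\varepsilon}{40\alpha}\log(1+\delta))}\le1$ and $\frac{8}{d_{\max}-4\varepsilon d}\le 1$; and (B1) $|B|\le\alpha n$, (B2) no edge has both endpoints in $B$, (B3) $\deg v\le d_{\max}+1$ for all $v\in B$, (B4) $|N(v)\cap B|\le1$ for all $v\in V$. Then for every $X\subseteq V$, \[e(X,V)\le (d_{\max}+1)|X|.\]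
   Context: $\|M\|$ is the spectral norm, $J$ the $n\times n$ all-ones matrix; $G$ is an $(n,d,\alpha)$-expander if $|V|=n$ and $\|A_G-\frac dnJ\|\le\alpha d$ where $A_G$ is the adjacency matrix. For $X,Y\subseteq V$, $e(X,Y)=\sum_{x\in X,y\in Y}(A_G)_{x,y}$. $N(v)$ is the neighborhood of $v$ in $G$. *)

theory Defs
  imports Complex_Main
begin

definition simple_graph :: "'a set \<Rightarrow> ('a \<Rightarrow> 'a \<Rightarrow> bool) \<Rightarrow> bool" where
  "simple_graph V E \<longleftrightarrow> finite V \<and> (\<forall>u v. E u v \<longrightarrow> u \<in> V \<and> v \<in> V)
     \<and> (\<forall>u v. E u v \<longrightarrow> E v u) \<and> (\<forall>v. \<not> E v v)"

definition adj :: "('a \<Rightarrow> 'a \<Rightarrow> bool) \<Rightarrow> 'a \<Rightarrow> 'a \<Rightarrow> real" where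
  "adj E u v = (if E u v then 1 else 0)"

definition nbhd :: "'a set \<Rightarrow> ('a \<Rightarrow> 'a \<Rightarrow> bool) \<Rightarrow> 'a \<Rightarrow> 'a set" where
  "nbhd V E v = {u \<in> V. E v u}"

definition degree :: "'a set \<Rightarrow> ('a \<Rightarrow> 'a \<Rightarrow> bool) \<Rightarrow> 'a \<Rightarrow> nat" where
  "degree V E v = card (nbhd V E v)"

definition induced_degree :: "'a set \<Rightarrow> ('a \<Rightarrow> 'a \<Rightarrow> bool) \<Rightarrow> 'a set \<Rightarrow> 'a \<Rightarrow> nat" where
  "induced_degree V E S v = card (nbhd V E v \<inter> S)"

definition e_count :: "('a \<Rightarrow> 'a \<Rightarrow> bool) \<Rightarrow> 'a set \<Rightarrow> 'a set \<Rightarrow> real" where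
  "e_count E X Y = (\<Sum>x\<in>X. \<Sum>y\<in>Y. adj E x y)"

definition spec_norm :: "'a set \<Rightarrow> ('a \<Rightarrow> 'a \<Rightarrow> real) \<Rightarrow> real" where
  "spec_norm V M = Sup {sqrt (\<Sum>i\<in>V. (\<Sum>j\<in>V. M i j * x j)\<^sup>2) | x. (\<Sum>j\<in>V. (x j)\<^sup>2) = 1}"

definition expander :: "'a set \<Rightarrow> ('a \<Rightarrow> 'a \<Rightarrow> bool) \<Rightarrow> nat \<Rightarrow> real \<Rightarrow> real \<Rightarrow> bool" where
  "expander V E n d \<alpha> \<longleftrightarrow> card V = n \<and>
     spec_norm V (\<lambda>u v. adj E u v - d / real n) \<le> \<alpha> * d"

end

theory Submission
  imports Defs
begin

text \<open>Only the definition of \<open>d\<^sub>m\<^sub>a\<^sub>x\<close>, (B3) and (B4) are needed. Since \<open>e(X,V)\<close> is the sum of the degrees of the vertices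
  of \<open>X\<close>, it suffices that every vertex has degree at most \<open>d\<^sub>m\<^sub>a\<^sub>x + 1\<close>: a vertex of \<open>B\<close>
  by (B3), and a vertex of \<open>W\<close> because it has at most \<open>d\<^sub>m\<^sub>a\<^sub>x\<close> neighbours in \<open>W\<close> and, by (B4),
  at most one in \<open>B\<close>.\<close>

lemma sum_adj_eq_degree:
  assumes "finite V"
  shows "(\<Sum>y\<in>V. adj E x y) = real (degree V E x)"
proof -
  have "(\<Sum>y\<in>V. adj E x y) = (\<Sum>y\<in>{y\<in>V. E x y}. 1)"
    using assms by (simp add: sum.inter_filter[symmetric] adj_def)
  then show ?thesis by (simp add: degree_def nbhd_def)
qed

lemma e_count_eq_sum_degree:
  assumes "finite V"
  shows "e_count E X V = (\<Sum>x\<in>X. real (degree V E x))"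
  using assms by (simp add: e_count_def sum_adj_eq_degree)

lemma e_count_le_if_degree_le:
  assumes "finite V" and "\<forall>x\<in>X. real (degree V E x) \<le> D"
  shows "e_count E X V \<le> D * real (card X)"
proof -
  have "e_count E X V \<le> (\<Sum>x\<in>X. D)"
    unfolding e_count_eq_sum_degree[OF \<open>finite V\<close>] using assms(2) by (intro sum_mono) blast
  then show ?thesis by (simp add: mult.commute)
qed

lemma degree_eq_induced_degree_add:
  assumes "finite V" and "V = W \<union> B" and "W \<inter> B = {}"
  shows "degree V E x = induced_degree V E W x + induced_degree V E B x"
proof -
  have "nbhd V E x = (nbhd V E x \<inter> W) \<union> (nbhd V E x \<inter> B)"
    using assms(2) by (auto simp: nbhd_def)
  moreover have "finite (nbhd V E x)"
    using assms(1) by (simp add: nbhd_def)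
  ultimately have "card (nbhd V E x) = card (nbhd V E x \<inter> W) + card (nbhd V E x \<inter> B)"
    using assms(3) by (metis card_Un_disjoint finite_Int disjoint_iff IntD2)
  then show ?thesis
    by (simp add: degree_def induced_degree_def)
qed

theorem lemma2p7:
  fixes V W B :: "'a set" and E :: "'a \<Rightarrow> 'a \<Rightarrow> bool"
    and \<epsilon> \<alpha> d \<delta> :: real and n dmax :: nat
  assumes graph: "simple_graph V E"
    and no_isolated: "\<forall>v\<in>V. nbhd V E v \<noteq> {}"
    and eps: "0 < \<epsilon>" "\<epsilon> < 1"
    and alpha: "0 < \<alpha>" "\<alpha> < 1/5"
    and alpha_d: "\<alpha> * d \<ge> 1"
    and partition: "V = W \<union> B" "W \<inter> B = {}"
    and n_def: "n = card V"
    and exp: "expander V E n d \<alpha>"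
    and dmax_def: "dmax = Max (induced_degree V E W ` W)"
    and mindeg: "\<forall>v\<in>W. real (induced_degree V E W v) \<ge> 2 * (\<epsilon> + \<alpha>) * d"
    and delta_def: "\<delta> = \<epsilon> * d / (real dmax - 2 * \<epsilon> * d)"
    and cond1: "8 * (1 + \<delta>) * (real dmax + 1)
                 / (\<delta>\<^sup>2 * exp (\<epsilon> / (40 * \<alpha>) * ln (1 + \<delta>))) \<le> 1"
    and cond2: "8 / (real dmax - 4 * \<epsilon> * d) \<le> 1"
    and B1: "real (card B) \<le> \<alpha> * real n"
    and B2: "\<forall>u\<in>B. \<forall>v\<in>B. \<not> E u v"
    and B3: "\<forall>v\<in>B. degree V E v \<le> dmax + 1"
    and B4: "\<forall>v\<in>V. card (nbhd V E v \<inter> B) \<le> 1"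
  shows "\<forall>X. X \<subseteq> V \<longrightarrow> e_count E X V \<le> (real dmax + 1) * real (card X)"
proof (intro allI impI)
  fix X assume "X \<subseteq> V"
  have "finite V" using graph by (simp add: simple_graph_def)
  have "degree V E x \<le> dmax + 1" if "x \<in> V" for x
  proof (cases "x \<in> B")
    case True
    then show ?thesis using B3 by blast
  next
    case False
    with \<open>x \<in> V\<close> partition have "x \<in> W" by blast
    then have "induced_degree V E W x \<le> dmax"
      using \<open>finite V\<close> partition(1) dmax_def by simp
    moreover have "induced_degree V E B x \<le> 1"
      using B4 \<open>x \<in> V\<close> by (simp add: induced_degree_def)
    ultimately show ?thesis
      using degree_eq_induced_degree_add[OF \<open>finite V\<close> partition] by simp
  qed
  with \<open>X \<subseteq> V\<close> have "\<forall>x\<in>X. real (degree V E x) \<le> real dmax + 1"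
    by fastforce
  then show "e_count E X V \<le> (real dmax + 1) * real (card X)"
    using e_count_le_if_degree_le[OF \<open>finite V\<close>] by blast
qed

end
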